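(* Let $(R,\mathfrak{m})$ be a Noetherian local ring and let $I$ be an ideal of $R$. Let $x_1,\ldots,x_s,y$ be a minimal generating set of $I$ and $J=(x_1,\ldots,x_s)$. Then, for each integer $n\geq 2$, there is a short exact sequence of $R$-modules $$0\to \frac{H_1(x_1t,\ldots,x_st;\mathbf{R}(I))_n}{yt\,H_1(x_1t,\ldots,x_st;\mathbf{R}(I))_{n-1}}\longrightarrow H_1(x_1t,\ldots,x_st,yt;\mathbf{R}(I))_n\stackrel{\sigma_n}{\longrightarrow}\frac{JI^{n-1}:y^n}{JI^{n-2}:y^{n-1}}\to 0,$$ where $\sigma_n$ sends the homology class of a cycle $(w_1t^{n-1},\ldots,w_st^{n-1},w_{s+1}t^{n-1})$, $w_i\in I^{n-1}$, to the class of $a\in (JI^{n-1}:y^n)$, where $a\in R$ is such that $w_{s+1}=ay^{n-1}+b$ for some $b\in JI^{n-2}$.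
   Context: $\mathbf{R}(I)=\bigoplus_{n\geq0}I^nt^n$ is the Rees algebra; $I^0=R$. For elements $z_1,\ldots,z_m$ of degree one of a graded ring $U=\bigoplus_n U_n$ (here $U=\mathbf{R}(I)$), $H_1(z_1,\ldots,z_m;U)_n$ is the first homology of the graded Koszul complex in degree $n$: $\wedge_2(R^m)\otimes U_{n-2}\xrightarrow{\partial_2}\wedge_1(R^m)\otimes U_{n-1}\xrightarrow{\partial_1}U_n$, with $\partial_2(e_i\wedge e_j\otimes u)=e_j\otimes z_iu-e_i\otimes z_ju$ and $\partial_1(e_i\otimes v)=z_iv$, where $e_1,\ldots,e_m$ is the standard basis of $R^m$. Thus cycles in degree $n$ are $m$-tuples in $U_{n-1}^m$. *)

theory Defs
  imports Main
begin

definition r_ideal :: "'a::comm_ring_1 set \<Rightarrow> bool" where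
  "r_ideal I \<longleftrightarrow> 0 \<in> I \<and> (\<forall>a\<in>I. \<forall>b\<in>I. a + b \<in> I) \<and> (\<forall>r. \<forall>a\<in>I. r * a \<in> I)"

definition ideal_span :: "'a::comm_ring_1 set \<Rightarrow> 'a set" where
  "ideal_span S = \<Inter>{I. r_ideal I \<and> S \<subseteq> I}"

definition ideal_mult :: "'a::comm_ring_1 set \<Rightarrow> 'a set \<Rightarrow> 'a set" where
  "ideal_mult I J = ideal_span {a * b | a b. a \<in> I \<and> b \<in> J}"

fun ideal_pow :: "'a::comm_ring_1 set \<Rightarrow> nat \<Rightarrow> 'a set" where
  "ideal_pow I 0 = UNIV"
| "ideal_pow I (Suc k) = ideal_mult I (ideal_pow I k)"

definition colon :: "'a::comm_ring_1 set \<Rightarrow> 'a \<Rightarrow> 'a set" where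
  "colon A b = {r. r * b \<in> A}"

definition maximal_ideal :: "'a::comm_ring_1 set \<Rightarrow> bool" where
  "maximal_ideal M \<longleftrightarrow> r_ideal M \<and> M \<noteq> UNIV \<and>
     (\<forall>J. r_ideal J \<and> M \<subseteq> J \<longrightarrow> J = M \<or> J = UNIV)"

definition noetherian_ring :: "'a::comm_ring_1 itself \<Rightarrow> bool" where
  "noetherian_ring _ \<longleftrightarrow> (\<forall>I::'a set. r_ideal I \<longrightarrow> (\<exists>F. finite F \<and> I = ideal_span F))"

definition local_ring :: "'a::comm_ring_1 itself \<Rightarrow> bool" where
  "local_ring _ \<longleftrightarrow> (\<exists>!M::'a set. maximal_ideal M)"

definition min_gen_set :: "'a::comm_ring_1 set \<Rightarrow> (nat \<Rightarrow> 'a) \<Rightarrow> nat \<Rightarrow> bool" where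
  "min_gen_set I z m \<longleftrightarrow> I = ideal_span (z ` {..<m}) \<and>
     (\<forall>F. finite F \<and> ideal_span F = I \<longrightarrow> m \<le> card F)"

(* Degree-k part of the Rees algebra R(I), identified with I^k (U_{-1} = 0 handled below). *)

(* Koszul 1-cycles in degree k of z_0 t,...,z_{m-1} t on R(I): m-tuples in U_{k-1}
   (represented as functions nat => 'a vanishing from m on) killed by d_1. *)
definition kcyc :: "'a::comm_ring_1 set \<Rightarrow> (nat \<Rightarrow> 'a) \<Rightarrow> nat \<Rightarrow> nat \<Rightarrow> (nat \<Rightarrow> 'a) set" where
  "kcyc I z m k = {v. (\<forall>i<m. v i \<in> (if k = 0 then {0} else ideal_pow I (k - 1))) \<and>
                      (\<forall>i\<ge>m. v i = 0) \<and> (\<Sum>i<m. z i * v i) = 0}"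

(* Koszul 1-boundaries in degree k: image of d_2 on wedge_2(R^m) \<otimes> U_{k-2}, where
   d_2(e_i \<and> e_j \<otimes> u) = e_j \<otimes> z_i u - e_i \<otimes> z_j u;  U_{k-2} = 0 when k < 2. *)
definition kbd :: "'a::comm_ring_1 set \<Rightarrow> (nat \<Rightarrow> 'a) \<Rightarrow> nat \<Rightarrow> nat \<Rightarrow> (nat \<Rightarrow> 'a) set" where
  "kbd I z m k = (if k < 2 then {\<lambda>_. 0} else
     {v. \<exists>u. (\<forall>i j. u i j \<in> ideal_pow I (k - 2)) \<and>
          v = (\<lambda>l. if l < m then (\<Sum>i<l. z i * u i l) - (\<Sum>j\<in>{l<..<m}. z j * u l j) else 0)})"

(* sigma-relation: a represents sigma_n of the cycle w (last coordinate index s) when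
   w_s = a y^{n-1} + b with b \<in> J I^{n-2} *)
definition sigma_rep :: "'a::comm_ring_1 set \<Rightarrow> 'a set \<Rightarrow> 'a \<Rightarrow> nat \<Rightarrow> nat \<Rightarrow> (nat \<Rightarrow> 'a) \<Rightarrow> 'a \<Rightarrow> bool" where
  "sigma_rep I J y s n w a \<longleftrightarrow>
     (\<exists>b \<in> ideal_mult J (ideal_pow I (n - 2)). w s = a * y ^ (n - 1) + b)"

end

theory Submission
  imports Defs
begin

text \<open>Write \<open>z = (x\<^sub>1, \<dots>, x\<^sub>s, y)\<close>. Since \<open>I = J + (y)\<close>, every element of \<open>I\<^sup>n\<^sup>-\<^sup>1\<close> has the form
  \<open>a y\<^sup>n\<^sup>-\<^sup>1 + b\<close> with \<open>b \<in> JI\<^sup>n\<^sup>-\<^sup>2\<close>; applied to the last entry of a Koszul cycle \<open>w\<close> of \<open>zt\<close>, the cycle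
  condition \<open>\<Sum> x\<^sub>i w\<^sub>i + y w\<^sub>s = 0\<close> gives \<open>a y\<^sup>n \<in> JI\<^sup>n\<^sup>-\<^sup>1\<close>. The last entry of a boundary is
  \<open>\<Sum> x\<^sub>i U\<^sub>i\<^sub>s \<in> JI\<^sup>n\<^sup>-\<^sup>2\<close>, so \<open>\<sigma>\<^sub>n\<close> is well defined, and \<open>c y\<^sup>n = \<Sum> x\<^sub>i g\<^sub>i\<close> yields the cycle
  \<open>(-g, c y\<^sup>n\<^sup>-\<^sup>1)\<close> mapping to \<open>c\<close>. A class lies in the kernel iff \<open>w\<^sub>s = \<Sum> x\<^sub>i h\<^sub>i \<in> JI\<^sup>n\<^sup>-\<^sup>2\<close>, and then
  subtracting the boundary of \<open>\<Sum> h\<^sub>i e\<^sub>i \<and> e\<^sub>s\<^sub>+\<^sub>1\<close> moves \<open>w\<close> onto a cycle of \<open>xt\<close>. The inclusion of cycles of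
  \<open>xt\<close> is the required map: the \<open>e\<^sub>i \<and> e\<^sub>s\<^sub>+\<^sub>1\<close>-components of a boundary of \<open>zt\<close> that vanishes in the
  last coordinate contribute exactly \<open>yt\<close> times a cycle of \<open>xt\<close> of degree \<open>n - 1\<close>.\<close>

lemma r_ideal_zero: "r_ideal I \<Longrightarrow> 0 \<in> I"
  unfolding r_ideal_def by blast

lemma r_ideal_add: "r_ideal I \<Longrightarrow> a \<in> I \<Longrightarrow> b \<in> I \<Longrightarrow> a + b \<in> I"
  unfolding r_ideal_def by blast

lemma r_ideal_mult_left: "r_ideal I \<Longrightarrow> a \<in> I \<Longrightarrow> r * a \<in> I"
  unfolding r_ideal_def by blast

lemma r_ideal_mult_right: "r_ideal I \<Longrightarrow> a \<in> I \<Longrightarrow> a * r \<in> I"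
  unfolding r_ideal_def by (metis mult.commute)

lemma r_ideal_uminus: "r_ideal I \<Longrightarrow> a \<in> I \<Longrightarrow> - a \<in> I"
  by (metis mult_minus1 r_ideal_mult_left)

lemma r_ideal_diff: "r_ideal I \<Longrightarrow> a \<in> I \<Longrightarrow> b \<in> I \<Longrightarrow> a - b \<in> I"
  by (metis diff_conv_add_uminus r_ideal_add r_ideal_uminus)

lemma r_ideal_sum: "r_ideal I \<Longrightarrow> (\<And>i. i \<in> A \<Longrightarrow> f i \<in> I) \<Longrightarrow> sum f A \<in> I"
  by (induction A rule: infinite_finite_induct) (simp_all add: r_ideal_zero r_ideal_add)

lemma r_ideal_UNIV: "r_ideal UNIV"
  unfolding r_ideal_def by simp

lemma r_ideal_ideal_span: "r_ideal (ideal_span S)"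
  unfolding ideal_span_def r_ideal_def by blast

lemma ideal_span_superset: "S \<subseteq> ideal_span S"
  unfolding ideal_span_def by blast

lemma ideal_span_least: "r_ideal T \<Longrightarrow> S \<subseteq> T \<Longrightarrow> ideal_span S \<subseteq> T"
  unfolding ideal_span_def by blast

lemma ideal_span_unique:
  assumes "r_ideal T" "S \<subseteq> T" "\<And>T'. r_ideal T' \<Longrightarrow> S \<subseteq> T' \<Longrightarrow> T \<subseteq> T'"
  shows "ideal_span S = T"
  using assms ideal_span_least ideal_span_superset r_ideal_ideal_span by (metis subset_antisym)

lemma r_ideal_ideal_mult: "r_ideal (ideal_mult A B)"
  unfolding ideal_mult_def by (rule r_ideal_ideal_span)

lemma mult_in_ideal_mult: "a \<in> A \<Longrightarrow> b \<in> B \<Longrightarrow> a * b \<in> ideal_mult A B"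
  unfolding ideal_mult_def by (rule subsetD[OF ideal_span_superset]) blast

lemma r_ideal_ideal_pow: "r_ideal (ideal_pow I k)"
  by (cases k) (simp_all add: r_ideal_UNIV r_ideal_ideal_mult)

lemma power_in_ideal_pow: "y \<in> I \<Longrightarrow> y ^ k \<in> ideal_pow I k"
  by (induction k) (simp_all add: mult_in_ideal_mult)

(* Keeps \<open>ideal_pow I (Suc k)\<close> folded, so that membership facts about it match syntactically. *)
declare ideal_pow.simps(2) [simp del]

definition lin_comb :: "(nat \<Rightarrow> 'a::comm_ring_1) \<Rightarrow> nat \<Rightarrow> 'a set \<Rightarrow> 'a set" where
  "lin_comb f m K = {(\<Sum>i<m. f i * g i) | g. \<forall>i<m. g i \<in> K}"

lemma lin_combI: "(\<And>i. i < m \<Longrightarrow> g i \<in> K) \<Longrightarrow> (\<Sum>i<m. f i * g i) \<in> lin_comb f m K"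
  unfolding lin_comb_def by blast

lemma r_ideal_lin_comb:
  assumes K: "r_ideal K"
  shows "r_ideal (lin_comb f m K)"
  unfolding r_ideal_def
proof (intro conjI ballI allI)
  show "0 \<in> lin_comb f m K"
    using lin_combI[of m "\<lambda>_. 0" K f] r_ideal_zero[OF K] by simp
next
  fix a b assume a: "a \<in> lin_comb f m K" and b: "b \<in> lin_comb f m K"
  obtain g where g: "\<And>i. i < m \<Longrightarrow> g i \<in> K" "a = (\<Sum>i<m. f i * g i)"
    using a unfolding lin_comb_def by blast
  obtain h where h: "\<And>i. i < m \<Longrightarrow> h i \<in> K" "b = (\<Sum>i<m. f i * h i)"
    using b unfolding lin_comb_def by blast
  have "a + b = (\<Sum>i<m. f i * (g i + h i))"
    by (simp add: g(2) h(2) distrib_left sum.distrib)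
  then show "a + b \<in> lin_comb f m K"
    using lin_combI[of m "\<lambda>i. g i + h i" K f] r_ideal_add[OF K] g(1) h(1) by simp
next
  fix r a assume "a \<in> lin_comb f m K"
  then obtain g where g: "\<And>i. i < m \<Longrightarrow> g i \<in> K" "a = (\<Sum>i<m. f i * g i)"
    unfolding lin_comb_def by blast
  have "r * a = (\<Sum>i<m. f i * (r * g i))"
    by (simp add: g(2) sum_distrib_left mult.left_commute)
  then show "r * a \<in> lin_comb f m K"
    using lin_combI[of m "\<lambda>i. r * g i" K f] r_ideal_mult_left[OF K] g(1) by simp
qed

lemma ideal_span_image_eq_lin_comb: "ideal_span (f ` {..<m}) = lin_comb f m UNIV"
proof (rule ideal_span_unique[OF r_ideal_lin_comb[OF r_ideal_UNIV]])
  show "f ` {..<m} \<subseteq> lin_comb f m UNIV"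
  proof
    fix a assume "a \<in> f ` {..<m}"
    then obtain i where i: "i < m" "a = f i" by blast
    have "(\<Sum>j<m. f j * (if j = i then 1 else 0)) = (\<Sum>j<m. if j = i then f i else 0)"
      by (rule sum.cong) auto
    also have "\<dots> = a"
      using i by simp
    finally show "a \<in> lin_comb f m UNIV"
      using lin_combI[of m "\<lambda>j. if j = i then 1 else 0" UNIV f] by simp
  qed
next
  fix T assume T: "r_ideal T" "f ` {..<m} \<subseteq> T"
  show "lin_comb f m UNIV \<subseteq> T"
  proof
    fix c assume "c \<in> lin_comb f m UNIV"
    then obtain g where g: "c = (\<Sum>i<m. f i * g i)"
      unfolding lin_comb_def by blast
    have "f i * g i \<in> T" if "i < m" for i
      using T that by (blast intro: r_ideal_mult_right)
    then show "c \<in> T"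
      unfolding g by (intro r_ideal_sum[OF T(1)]) simp
  qed
qed

lemma ideal_mult_span_eq_lin_comb:
  assumes K: "r_ideal K"
  shows "ideal_mult (ideal_span (f ` {..<m})) K = lin_comb f m K"
  unfolding ideal_mult_def
proof (rule ideal_span_unique[OF r_ideal_lin_comb[OF K]])
  show "{a * b |a b. a \<in> ideal_span (f ` {..<m}) \<and> b \<in> K} \<subseteq> lin_comb f m K"
  proof
    fix c assume "c \<in> {a * b |a b. a \<in> ideal_span (f ` {..<m}) \<and> b \<in> K}"
    then obtain a b where ab: "c = a * b" "a \<in> lin_comb f m UNIV" "b \<in> K"
      unfolding ideal_span_image_eq_lin_comb by blast
    then obtain g where "a = (\<Sum>i<m. f i * g i)"
      unfolding lin_comb_def by blast
    then have "c = (\<Sum>i<m. f i * (g i * b))"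
      by (simp add: ab(1) sum_distrib_right mult.assoc)
    then show "c \<in> lin_comb f m K"
      using lin_combI[of m "\<lambda>i. g i * b" K f] r_ideal_mult_left[OF K ab(3)] by simp
  qed
next
  fix T assume T: "r_ideal T" "{a * b |a b. a \<in> ideal_span (f ` {..<m}) \<and> b \<in> K} \<subseteq> T"
  show "lin_comb f m K \<subseteq> T"
  proof
    fix c assume "c \<in> lin_comb f m K"
    then obtain g where g: "\<And>i. i < m \<Longrightarrow> g i \<in> K" "c = (\<Sum>i<m. f i * g i)"
      unfolding lin_comb_def by blast
    have "f i * g i \<in> T" if "i < m" for i
    proof -
      have "f i \<in> ideal_span (f ` {..<m})"
        using that by (intro subsetD[OF ideal_span_superset]) simp
      then show ?thesis
        using T(2) g(1)[OF that] by blast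
    qed
    then show "c \<in> T"
      unfolding g(2) by (intro r_ideal_sum[OF T(1)]) simp
  qed
qed

lemma r_ideal_shift:
  assumes L: "r_ideal L"
  shows "r_ideal {a * t + b | a b. b \<in> L}"
  unfolding r_ideal_def
proof (intro conjI ballI allI)
  show "0 \<in> {a * t + b | a b. b \<in> L}"
    using r_ideal_zero[OF L] by (metis (mono_tags, lifting) add_0 mem_Collect_eq mult_zero_left)
next
  fix p q assume "p \<in> {a * t + b | a b. b \<in> L}" "q \<in> {a * t + b | a b. b \<in> L}"
  then obtain a b a' b' where "p = a * t + b" "b \<in> L" "q = a' * t + b'" "b' \<in> L"
    by blast
  then have "p + q = (a + a') * t + (b + b')" "b + b' \<in> L"
    by (simp_all add: algebra_simps r_ideal_add[OF L])
  then show "p + q \<in> {a * t + b | a b. b \<in> L}"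
    by blast
next
  fix r p assume "p \<in> {a * t + b | a b. b \<in> L}"
  then obtain a b where "p = a * t + b" "b \<in> L"
    by blast
  then have "r * p = (r * a) * t + r * b" "r * b \<in> L"
    by (simp_all add: algebra_simps r_ideal_mult_right[OF L])
  then show "r * p \<in> {a * t + b | a b. b \<in> L}"
    by blast
qed

lemma kcyc_iff:
  "0 < k \<Longrightarrow> v \<in> kcyc I f m k \<longleftrightarrow>
     (\<forall>i<m. v i \<in> ideal_pow I (k - 1)) \<and> (\<forall>i\<ge>m. v i = 0) \<and> (\<Sum>i<m. f i * v i) = 0"
  unfolding kcyc_def by simp

definition koszul_bd :: "(nat \<Rightarrow> 'a::comm_ring_1) \<Rightarrow> nat \<Rightarrow> (nat \<Rightarrow> nat \<Rightarrow> 'a) \<Rightarrow> nat \<Rightarrow> 'a" where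
  "koszul_bd f m u = (\<lambda>l. if l < m then (\<Sum>i<l. f i * u i l) - (\<Sum>j\<in>{l<..<m}. f j * u l j) else 0)"

lemma kbd_eq_koszul_bd:
  "2 \<le> k \<Longrightarrow> kbd I f m k = {koszul_bd f m u | u. \<forall>i j. u i j \<in> ideal_pow I (k - 2)}"
  unfolding kbd_def koszul_bd_def by auto

lemma koszul_bd_cong:
  assumes "\<And>i j. j < m \<Longrightarrow> U i j = V i j"
  shows "koszul_bd f m U = koszul_bd f m V"
proof
  fix l
  have "(\<Sum>i<l. f i * U i l) = (\<Sum>i<l. f i * V i l)" if "l < m"
    using that assms by (intro sum.cong) auto
  moreover have "(\<Sum>j\<in>{l<..<m}. f j * U l j) = (\<Sum>j\<in>{l<..<m}. f j * V l j)"
    using assms by (intro sum.cong) auto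
  ultimately show "koszul_bd f m U l = koszul_bd f m V l"
    unfolding koszul_bd_def by simp
qed

lemma koszul_bd_eq_0: "m \<le> l \<Longrightarrow> koszul_bd f m U l = 0"
  by (simp add: koszul_bd_def)

lemma koszul_bd_zero: "koszul_bd f m (\<lambda>_ _. 0) = (\<lambda>_. 0)"
  unfolding koszul_bd_def by auto

lemma zero_in_kbd: "(\<lambda>_. 0) \<in> kbd I f m k"
proof (cases "k < 2")
  case False
  then show ?thesis
    using koszul_bd_zero[of f m] r_ideal_zero[OF r_ideal_ideal_pow]
    by (auto simp: kbd_eq_koszul_bd intro!: exI[of _ "\<lambda>_ _. 0"])
qed (simp add: kbd_def)

lemma zero_mem_colon: "r_ideal A \<Longrightarrow> 0 \<in> colon A t"
  by (simp add: colon_def r_ideal_zero)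

locale adjoined_generator =
  fixes x :: "nat \<Rightarrow> 'a::comm_ring_1" and y :: 'a and s :: nat
    and z :: "nat \<Rightarrow> 'a" and I J :: "'a set"
  assumes z_def: "z = (\<lambda>i. if i < s then x i else y)"
    and I_def: "I = ideal_span (z ` {..<Suc s})"
    and J_def: "J = ideal_span (x ` {..<s})"
begin

lemma z_last: "z s = y"
  by (simp add: z_def)

lemma sum_z_lessThan: "(\<Sum>i<s. z i * w i) = (\<Sum>i<s. x i * w i)"
  by (intro sum.cong) (auto simp: z_def)

lemma sum_z: "(\<Sum>i<Suc s. z i * w i) = (\<Sum>i<s. x i * w i) + y * w s"
  by (simp add: sum_z_lessThan z_last)

lemma koszul_bd_z:
  "koszul_bd z (Suc s) U l =
     (if l < s then koszul_bd x s U l - y * U l s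
      else if l = s then (\<Sum>i<s. x i * U i s) else 0)"
proof -
  consider "l < s" | "l = s" | "s < l"
    by linarith
  then show ?thesis
  proof cases
    case 1
    then have "{l<..<Suc s} = insert s {l<..<s}"
      by auto
    then have "(\<Sum>j\<in>{l<..<Suc s}. z j * U l j) = y * U l s + (\<Sum>j\<in>{l<..<s}. x j * U l j)"
      by (simp add: z_def)
    moreover have "(\<Sum>i<l. z i * U i l) = (\<Sum>i<l. x i * U i l)"
      using 1 by (intro sum.cong) (auto simp: z_def)
    ultimately show ?thesis
      using 1 by (simp add: koszul_bd_def algebra_simps)
  next
    case 2
    have "{s<..<Suc s} = {}"
      by auto
    with 2 show ?thesis
      by (simp add: koszul_bd_def sum_z_lessThan)
  qed (simp add: koszul_bd_def)
qed

lemma I_eq_lin_comb: "I = lin_comb z (Suc s) UNIV"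
  by (simp add: I_def ideal_span_image_eq_lin_comb)

lemma y_in_I: "y \<in> I"
  unfolding I_def using ideal_span_superset[of "z ` {..<Suc s}"] by (auto simp: z_def)

lemma mem_I_decomp:
  assumes "p \<in> I"
  obtains r c where "p = (\<Sum>i<s. x i * r i) + y * c"
  using assms sum_z unfolding I_eq_lin_comb lin_comb_def by blast

lemma ideal_mult_J_eq: "r_ideal K \<Longrightarrow> ideal_mult J K = lin_comb x s K"
  unfolding J_def by (rule ideal_mult_span_eq_lin_comb)

lemma mem_colon_J_iff:
  "c \<in> colon (ideal_mult J (ideal_pow I k)) t \<longleftrightarrow> c * t \<in> lin_comb x s (ideal_pow I k)"
  by (simp add: colon_def ideal_mult_J_eq r_ideal_ideal_pow)

lemma sigma_rep_iff:
  "sigma_rep I J y s n w a \<longleftrightarrow>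
     (\<exists>b \<in> lin_comb x s (ideal_pow I (n - 2)). w s = a * y ^ (n - 1) + b)"
  by (simp add: sigma_rep_def ideal_mult_J_eq r_ideal_ideal_pow)

lemma kcyc_z_iff:
  "0 < n \<Longrightarrow> w \<in> kcyc I z (Suc s) n \<longleftrightarrow>
     (\<forall>i\<le>s. w i \<in> ideal_pow I (n - 1)) \<and> (\<forall>i>s. w i = 0) \<and>
     (\<Sum>i<s. x i * w i) + y * w s = 0"
  by (simp add: kcyc_iff sum_z_lessThan z_last less_Suc_eq_le Suc_le_eq)

lemma y_mult_lin_comb:
  assumes "b \<in> lin_comb x s (ideal_pow I k)"
  shows "y * b \<in> lin_comb x s (ideal_pow I (Suc k))"
proof -
  obtain g where g: "\<And>i. i < s \<Longrightarrow> g i \<in> ideal_pow I k" "b = (\<Sum>i<s. x i * g i)"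
    using assms unfolding lin_comb_def by blast
  have "y * b = (\<Sum>i<s. x i * (y * g i))"
    by (simp add: g(2) sum_distrib_left mult.left_commute)
  then show ?thesis
    using lin_combI[of s "\<lambda>i. y * g i" "ideal_pow I (Suc k)" x] g(1) y_in_I
    by (simp add: ideal_pow.simps(2) mult_in_ideal_mult)
qed

(* The hypothesis asks for \<open>y b \<in> JI\<^sup>k\<close> rather than \<open>b \<in> JI\<^sup>k\<^sup>-\<^sup>1\<close>, which also covers \<open>k = 0\<close>. *)
lemma ideal_pow_Suc_subset:
  assumes "\<And>q. q \<in> ideal_pow I k \<Longrightarrow> \<exists>a b. q = a * y ^ k + b \<and> y * b \<in> lin_comb x s (ideal_pow I k)"
  shows "ideal_pow I (Suc k) \<subseteq> {a * y ^ Suc k + b | a b. b \<in> lin_comb x s (ideal_pow I k)}"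
proof -
  let ?K = "ideal_pow I k"
  have LK: "r_ideal (lin_comb x s ?K)"
    by (rule r_ideal_lin_comb[OF r_ideal_ideal_pow])
  have "p * q \<in> {a * y ^ Suc k + b | a b. b \<in> lin_comb x s ?K}" if "p \<in> I" "q \<in> ?K" for p q
  proof -
    obtain r c where p: "p = (\<Sum>i<s. x i * r i) + y * c"
      using \<open>p \<in> I\<close> by (rule mem_I_decomp)
    obtain a b where q: "q = a * y ^ k + b" "y * b \<in> lin_comb x s ?K"
      using assms[OF \<open>q \<in> ?K\<close>] by blast
    have "p * q = (\<Sum>i<s. x i * (r i * q)) + c * (y * q)"
      by (simp add: p algebra_simps sum_distrib_left)
    also have "c * (y * q) = (c * a) * y ^ Suc k + c * (y * b)"
      by (simp add: q(1) algebra_simps)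
    finally have "p * q = (c * a) * y ^ Suc k + ((\<Sum>i<s. x i * (r i * q)) + c * (y * b))"
      by (simp add: algebra_simps)
    moreover have "(\<Sum>i<s. x i * (r i * q)) \<in> lin_comb x s ?K"
      using r_ideal_mult_left[OF r_ideal_ideal_pow \<open>q \<in> ?K\<close>] by (intro lin_combI)
    moreover have "c * (y * b) \<in> lin_comb x s ?K"
      by (rule r_ideal_mult_left[OF LK q(2)])
    ultimately show ?thesis
      using r_ideal_add[OF LK] by blast
  qed
  then show ?thesis
    unfolding ideal_pow.simps ideal_mult_def
    by (intro ideal_span_least[OF r_ideal_shift[OF LK]]) blast
qed

lemma ideal_pow_Suc_decomp:
  "e \<in> ideal_pow I (Suc k) \<Longrightarrow> \<exists>a. \<exists>b \<in> lin_comb x s (ideal_pow I k). e = a * y ^ Suc k + b"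
proof (induction k arbitrary: e)
  case 0
  have "q = q * y ^ 0 + 0 \<and> y * 0 \<in> lin_comb x s (ideal_pow I 0)" for q
    using r_ideal_zero[OF r_ideal_lin_comb[OF r_ideal_UNIV]] by simp
  then show ?case
    using ideal_pow_Suc_subset[of 0] "0.prems" by blast
next
  case (Suc k)
  have "\<exists>a b. q = a * y ^ Suc k + b \<and> y * b \<in> lin_comb x s (ideal_pow I (Suc k))"
    if "q \<in> ideal_pow I (Suc k)" for q
    using Suc.IH[OF that] y_mult_lin_comb by blast
  then show ?case
    using ideal_pow_Suc_subset[of "Suc k"] Suc.prems by blast
qed

lemma kbd_z_last:
  assumes "d \<in> kbd I z (Suc s) (Suc (Suc k))"
  shows "d s \<in> lin_comb x s (ideal_pow I k)"
proof -
  obtain U where U: "\<And>i j. U i j \<in> ideal_pow I k" "d = koszul_bd z (Suc s) U"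
    using assms by (auto simp: kbd_eq_koszul_bd)
  then have "d s = (\<Sum>i<s. x i * U i s)"
    by (simp add: koszul_bd_z)
  then show ?thesis
    using U(1) by (simp add: lin_combI)
qed

lemma sigma_rep_exists:
  assumes "w \<in> kcyc I z (Suc s) (Suc (Suc k))"
  shows "\<exists>a. sigma_rep I J y s (Suc (Suc k)) w a"
proof -
  have "w s \<in> ideal_pow I (Suc k)"
    using assms by (simp add: kcyc_z_iff)
  then show ?thesis
    unfolding sigma_rep_iff using ideal_pow_Suc_decomp by auto
qed

lemma sigma_rep_in_colon:
  assumes w: "w \<in> kcyc I z (Suc s) (Suc (Suc k))"
    and a: "sigma_rep I J y s (Suc (Suc k)) w a"
  shows "a \<in> colon (ideal_mult J (ideal_pow I (Suc k))) (y ^ Suc (Suc k))"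
proof -
  let ?L = "lin_comb x s (ideal_pow I (Suc k))"
  have L: "r_ideal ?L"
    by (rule r_ideal_lin_comb[OF r_ideal_ideal_pow])
  obtain b where b: "b \<in> lin_comb x s (ideal_pow I k)" "w s = a * y ^ Suc k + b"
    using a by (auto simp: sigma_rep_iff)
  have ws: "\<And>i. i < s \<Longrightarrow> w i \<in> ideal_pow I (Suc k)" "(\<Sum>i<s. x i * w i) + y * w s = 0"
    using w by (simp_all add: kcyc_z_iff)
  have "a * y ^ Suc (Suc k) = y * w s - y * b"
    by (simp add: b(2) algebra_simps)
  also have "y * w s = (\<Sum>i<s. x i * - w i)"
    using ws(2) by (simp add: sum_negf eq_neg_iff_add_eq_0 add.commute)
  finally have "a * y ^ Suc (Suc k) = (\<Sum>i<s. x i * - w i) - y * b" .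
  moreover have "(\<Sum>i<s. x i * - w i) \<in> ?L"
    using ws(1) by (intro lin_combI r_ideal_uminus[OF r_ideal_ideal_pow])
  moreover have "y * b \<in> ?L"
    using b(1) by (rule y_mult_lin_comb)
  ultimately show ?thesis
    unfolding mem_colon_J_iff by (simp add: r_ideal_diff[OF L])
qed

lemma sigma_rep_diff_in_colon:
  assumes "(\<lambda>i. w i - w' i) \<in> kbd I z (Suc s) (Suc (Suc k))"
    and "sigma_rep I J y s (Suc (Suc k)) w a" "sigma_rep I J y s (Suc (Suc k)) w' a'"
  shows "a - a' \<in> colon (ideal_mult J (ideal_pow I k)) (y ^ Suc k)"
proof -
  let ?L = "lin_comb x s (ideal_pow I k)"
  have L: "r_ideal ?L"
    by (rule r_ideal_lin_comb[OF r_ideal_ideal_pow])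
  obtain b b' where b: "b \<in> ?L" "w s = a * y ^ Suc k + b"
    and b': "b' \<in> ?L" "w' s = a' * y ^ Suc k + b'"
    using assms(2,3) by (auto simp: sigma_rep_iff)
  have "(a - a') * y ^ Suc k = (w s - w' s) - b + b'"
    by (simp add: b(2) b'(2) algebra_simps)
  moreover have "w s - w' s \<in> ?L"
    using kbd_z_last[OF assms(1)] by simp
  ultimately show ?thesis
    unfolding mem_colon_J_iff using b(1) b'(1) by (simp add: r_ideal_add[OF L] r_ideal_diff[OF L])
qed

lemma sigma_rep_surj:
  assumes "c \<in> colon (ideal_mult J (ideal_pow I (Suc k))) (y ^ Suc (Suc k))"
  shows "\<exists>w \<in> kcyc I z (Suc s) (Suc (Suc k)). sigma_rep I J y s (Suc (Suc k)) w c"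
proof -
  let ?Q = "ideal_pow I (Suc k)"
  have Q: "r_ideal ?Q"
    by (rule r_ideal_ideal_pow)
  obtain g where g: "\<And>i. i < s \<Longrightarrow> g i \<in> ?Q" "c * y ^ Suc (Suc k) = (\<Sum>i<s. x i * g i)"
    using assms unfolding mem_colon_J_iff lin_comb_def by blast
  define w where "w = (\<lambda>i. if i < s then - g i else if i = s then c * y ^ Suc k else 0)"
  have "w i \<in> ?Q" if "i \<le> s" for i
    using that g(1) r_ideal_uminus[OF Q] r_ideal_mult_left[OF Q power_in_ideal_pow[OF y_in_I]]
    by (auto simp: w_def)
  moreover have "(\<Sum>i<s. x i * w i) = - (c * y ^ Suc (Suc k))"
    unfolding g(2) by (simp add: w_def sum_negf)
  ultimately have "w \<in> kcyc I z (Suc s) (Suc (Suc k))"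
    by (simp add: kcyc_z_iff w_def algebra_simps)
  moreover have "sigma_rep I J y s (Suc (Suc k)) w c"
    using r_ideal_zero[OF r_ideal_lin_comb[OF r_ideal_ideal_pow]]
    by (auto simp: sigma_rep_iff w_def)
  ultimately show ?thesis
    by blast
qed

lemma kcyc_x_subset_kcyc_z: "kcyc I x s n \<subseteq> kcyc I z (Suc s) n"
proof
  fix v assume "v \<in> kcyc I x s n"
  moreover have "0 \<in> (if n = 0 then {0} else ideal_pow I (n - 1))"
    by (simp add: r_ideal_zero[OF r_ideal_ideal_pow])
  ultimately show "v \<in> kcyc I z (Suc s) n"
    unfolding kcyc_def by (auto simp: sum_z_lessThan less_Suc_eq)
qed

lemma kbd_x_plus_y_kcyc_in_kbd_z:
  assumes b: "b \<in> kbd I x s (Suc (Suc k))" and u: "u \<in> kcyc I x s (Suc k)"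
  shows "(\<lambda>i. b i + y * u i) \<in> kbd I z (Suc s) (Suc (Suc k))"
proof -
  let ?P = "ideal_pow I k"
  obtain V where V: "\<And>i j. V i j \<in> ?P" "b = koszul_bd x s V"
    using b by (auto simp: kbd_eq_koszul_bd)
  have u': "\<And>i. i < s \<Longrightarrow> u i \<in> ?P" "\<And>i. s \<le> i \<Longrightarrow> u i = 0" "(\<Sum>i<s. x i * u i) = 0"
    using u by (simp_all add: kcyc_iff)
  define U where "U = (\<lambda>i j. if j = s then - u i else V i j)"
  have "U i j \<in> ?P" for i j
    using V(1) u'(1,2)
    by (cases "i < s") (auto simp: U_def r_ideal_uminus[OF r_ideal_ideal_pow] r_ideal_zero[OF r_ideal_ideal_pow])
  moreover have "(\<lambda>i. b i + y * u i) = koszul_bd z (Suc s) U"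
  proof
    fix l
    have "koszul_bd x s U = koszul_bd x s V"
      by (rule koszul_bd_cong) (simp add: U_def)
    then show "b l + y * u l = koszul_bd z (Suc s) U l"
      using u'(2,3) by (auto simp: koszul_bd_z V(2) U_def sum_negf koszul_bd_eq_0)
  qed
  ultimately show ?thesis
    by (auto simp: kbd_eq_koszul_bd)
qed

lemma kbd_z_decomp:
  assumes d: "d \<in> kbd I z (Suc s) (Suc (Suc k))" and ds: "d s = 0"
  shows "\<exists>b \<in> kbd I x s (Suc (Suc k)). \<exists>u \<in> kcyc I x s (Suc k). d = (\<lambda>i. b i + y * u i)"
proof -
  let ?P = "ideal_pow I k"
  obtain U where U: "\<And>i j. U i j \<in> ?P" "d = koszul_bd z (Suc s) U"
    using d by (auto simp: kbd_eq_koszul_bd)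
  define u where "u = (\<lambda>l. if l < s then - U l s else 0)"
  have "(\<Sum>i<s. x i * U i s) = 0"
    using ds U(2) by (simp add: koszul_bd_z)
  then have "u \<in> kcyc I x s (Suc k)"
    using U(1) by (simp add: kcyc_iff u_def sum_negf r_ideal_uminus[OF r_ideal_ideal_pow])
  moreover have "koszul_bd x s U \<in> kbd I x s (Suc (Suc k))"
    using U(1) by (auto simp: kbd_eq_koszul_bd)
  moreover have "d = (\<lambda>i. koszul_bd x s U i + y * u i)"
  proof
    fix l
    show "d l = koszul_bd x s U l + y * u l"
      using ds by (cases "l < s") (auto simp: U(2) koszul_bd_z u_def koszul_bd_eq_0)
  qed
  ultimately show ?thesis
    by blast
qed

lemma sigma_rep_colon_iff:
  "(\<exists>a. sigma_rep I J y s (Suc (Suc k)) w a \<and> a \<in> colon (ideal_mult J (ideal_pow I k)) (y ^ Suc k))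
     \<longleftrightarrow> w s \<in> lin_comb x s (ideal_pow I k)"
proof
  let ?L = "lin_comb x s (ideal_pow I k)"
  have L: "r_ideal ?L"
    by (rule r_ideal_lin_comb[OF r_ideal_ideal_pow])
  assume "\<exists>a. sigma_rep I J y s (Suc (Suc k)) w a \<and> a \<in> colon (ideal_mult J (ideal_pow I k)) (y ^ Suc k)"
  then obtain a b where "b \<in> ?L" "w s = a * y ^ Suc k + b" "a * y ^ Suc k \<in> ?L"
    unfolding sigma_rep_iff mem_colon_J_iff by auto
  then show "w s \<in> ?L"
    using r_ideal_add[OF L] by simp
next
  assume "w s \<in> lin_comb x s (ideal_pow I k)"
  then have "sigma_rep I J y s (Suc (Suc k)) w 0"
    unfolding sigma_rep_iff by simp
  then show "\<exists>a. sigma_rep I J y s (Suc (Suc k)) w a \<and> a \<in> colon (ideal_mult J (ideal_pow I k)) (y ^ Suc k)"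
    using zero_mem_colon[OF r_ideal_ideal_mult] by blast
qed

lemma kcyc_z_homologous_kcyc_x:
  assumes w: "w \<in> kcyc I z (Suc s) (Suc (Suc k))" and ws: "w s \<in> lin_comb x s (ideal_pow I k)"
  shows "\<exists>v \<in> kcyc I x s (Suc (Suc k)). (\<lambda>i. w i - v i) \<in> kbd I z (Suc s) (Suc (Suc k))"
proof -
  let ?P = "ideal_pow I k" and ?Q = "ideal_pow I (Suc k)"
  obtain h where h: "\<And>i. i < s \<Longrightarrow> h i \<in> ?P" "w s = (\<Sum>i<s. x i * h i)"
    using ws unfolding lin_comb_def by blast
  have w': "\<And>i. i \<le> s \<Longrightarrow> w i \<in> ?Q" "\<And>i. s < i \<Longrightarrow> w i = 0" "(\<Sum>i<s. x i * w i) + y * w s = 0"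
    using w by (simp_all add: kcyc_z_iff)
  define v where "v = (\<lambda>l. if l < s then w l + y * h l else 0)"
  define U where "U = (\<lambda>i j. if j = s \<and> i < s then h i else 0)"
  have "(\<Sum>i<s. x i * v i) = (\<Sum>i<s. x i * w i) + y * w s"
    by (simp add: v_def h(2) algebra_simps sum.distrib sum_distrib_left)
  moreover have "y * h i \<in> ?Q" if "i < s" for i
    using h(1)[OF that] y_in_I by (simp add: ideal_pow.simps(2) mult_in_ideal_mult)
  ultimately have "v \<in> kcyc I x s (Suc (Suc k))"
    using w'(1,3) by (simp add: kcyc_iff v_def r_ideal_add[OF r_ideal_ideal_pow])
  moreover have "U i j \<in> ?P" for i j
    using h(1) by (simp add: U_def r_ideal_zero[OF r_ideal_ideal_pow])
  moreover have "(\<lambda>i. w i - v i) = koszul_bd z (Suc s) U"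
  proof
    fix l
    have "koszul_bd x s U = (\<lambda>_. 0)"
      using koszul_bd_cong[of s U "\<lambda>_ _. 0" x] koszul_bd_zero by (simp add: U_def)
    moreover have "(\<Sum>i<s. x i * U i s) = w s"
      by (simp add: U_def h(2))
    ultimately show "w l - v l = koszul_bd z (Suc s) U l"
      using w'(2) by (auto simp: koszul_bd_z v_def U_def)
  qed
  ultimately show ?thesis
    by (auto simp: kbd_eq_koszul_bd)
qed

lemma kbd_z_iff:
  assumes "d s = 0"
  shows "(\<exists>b \<in> kbd I x s (Suc (Suc k)). \<exists>u \<in> kcyc I x s (Suc k). d = (\<lambda>i. b i + y * u i))
    \<longleftrightarrow> d \<in> kbd I z (Suc s) (Suc (Suc k))"
  using kbd_x_plus_y_kcyc_in_kbd_z kbd_z_decomp assms by blast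

lemma ker_sigma_iff:
  assumes w: "w \<in> kcyc I z (Suc s) (Suc (Suc k))"
  shows "(\<exists>a. sigma_rep I J y s (Suc (Suc k)) w a \<and> a \<in> colon (ideal_mult J (ideal_pow I k)) (y ^ Suc k))
    \<longleftrightarrow> (\<exists>v \<in> kcyc I x s (Suc (Suc k)). (\<lambda>i. w i - v i) \<in> kbd I z (Suc s) (Suc (Suc k)))"
  unfolding sigma_rep_colon_iff
proof
  assume "w s \<in> lin_comb x s (ideal_pow I k)"
  then show "\<exists>v \<in> kcyc I x s (Suc (Suc k)). (\<lambda>i. w i - v i) \<in> kbd I z (Suc s) (Suc (Suc k))"
    by (rule kcyc_z_homologous_kcyc_x[OF w])
next
  assume "\<exists>v \<in> kcyc I x s (Suc (Suc k)). (\<lambda>i. w i - v i) \<in> kbd I z (Suc s) (Suc (Suc k))"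
  then obtain v where "v \<in> kcyc I x s (Suc (Suc k))" "(\<lambda>i. w i - v i) \<in> kbd I z (Suc s) (Suc (Suc k))"
    by blast
  moreover from this(1) have "v s = 0"
    by (simp add: kcyc_iff)
  ultimately show "w s \<in> lin_comb x s (ideal_pow I k)"
    using kbd_z_last by fastforce
qed

end

theorem lemma3p1:
  fixes x :: "nat \<Rightarrow> 'a::comm_ring_1" and y :: 'a and I J :: "'a set"
    and s n :: nat and z :: "nat \<Rightarrow> 'a"
  assumes noeth: "noetherian_ring TYPE('a)"
    and loc: "local_ring TYPE('a)"
    and idl: "r_ideal I"
    and zdef: "z = (\<lambda>i. if i < s then x i else y)"
    and mingen: "min_gen_set I z (Suc s)"
    and Jdef: "J = ideal_span (x ` {..<s})"
    and n2: "2 \<le> n"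
  shows
   \<comment> \<open>sigma_n is defined on cycles: a representation w_s = a y^{n-1} + b exists,
       and every such a lies in JI^{n-1} : y^n\<close>
   "(\<forall>w \<in> kcyc I z (Suc s) n. \<exists>a. sigma_rep I J y s n w a) \<and>
    (\<forall>w a. w \<in> kcyc I z (Suc s) n \<and> sigma_rep I J y s n w a \<longrightarrow>
        a \<in> colon (ideal_mult J (ideal_pow I (n - 1))) (y ^ n)) \<and>
   \<comment> \<open>sigma_n is well defined on homology classes (independent of all choices)\<close>
    (\<forall>w w' a a'. w \<in> kcyc I z (Suc s) n \<and> w' \<in> kcyc I z (Suc s) n \<and>
        (\<lambda>i. w i - w' i) \<in> kbd I z (Suc s) n \<and> sigma_rep I J y s n w a \<and> sigma_rep I J y s n w' a' \<longrightarrow>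
        a - a' \<in> colon (ideal_mult J (ideal_pow I (n - 2))) (y ^ (n - 1))) \<and>
   \<comment> \<open>sigma_n is surjective\<close>
    (\<forall>c \<in> colon (ideal_mult J (ideal_pow I (n - 1))) (y ^ n).
        \<exists>w \<in> kcyc I z (Suc s) n. \<exists>a. sigma_rep I J y s n w a \<and>
          a - c \<in> colon (ideal_mult J (ideal_pow I (n - 2))) (y ^ (n - 1))) \<and>
   \<comment> \<open>there is an injective R-linear map from H_1(x t)_n / yt H_1(x t)_{n-1} onto ker sigma_n\<close>
    (\<exists>\<alpha> :: (nat \<Rightarrow> 'a) \<Rightarrow> (nat \<Rightarrow> 'a).
       (\<forall>v \<in> kcyc I x s n. \<alpha> v \<in> kcyc I z (Suc s) n) \<and>
       (\<forall>r v v'. v \<in> kcyc I x s n \<and> v' \<in> kcyc I x s n \<longrightarrow>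
          (\<lambda>i. \<alpha> (\<lambda>j. r * v j + v' j) i - (r * \<alpha> v i + \<alpha> v' i)) \<in> kbd I z (Suc s) n) \<and>
       (\<forall>v v'. v \<in> kcyc I x s n \<and> v' \<in> kcyc I x s n \<longrightarrow>
          ((\<exists>b \<in> kbd I x s n. \<exists>u \<in> kcyc I x s (n - 1). (\<lambda>i. v i - v' i) = (\<lambda>i. b i + y * u i))
           \<longleftrightarrow> (\<lambda>i. \<alpha> v i - \<alpha> v' i) \<in> kbd I z (Suc s) n)) \<and>
       (\<forall>w \<in> kcyc I z (Suc s) n.
          (\<exists>a. sigma_rep I J y s n w a \<and>
               a \<in> colon (ideal_mult J (ideal_pow I (n - 2))) (y ^ (n - 1)))
          \<longleftrightarrow> (\<exists>v \<in> kcyc I x s n. (\<lambda>i. w i - \<alpha> v i) \<in> kbd I z (Suc s) n)))"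
proof -
  interpret adjoined_generator x y s z I J
    using zdef mingen Jdef by unfold_locales (simp_all add: min_gen_set_def)
  obtain k where n: "n = Suc (Suc k)"
    using n2 by (metis add_2_eq_Suc le_iff_add)
  have pred_n: "n - 1 = Suc k" "n - 2 = k"
    using n by simp_all
  have kcyc_x_last: "v s = 0" if "v \<in> kcyc I x s (Suc (Suc k))" for v
    using that by (simp add: kcyc_iff)
  have zero_colon: "0 \<in> colon (ideal_mult J (ideal_pow I k)) (y ^ Suc k)"
    by (rule zero_mem_colon[OF r_ideal_ideal_mult])
  show ?thesis
    unfolding pred_n unfolding n
    apply (intro conjI exI[of _ "\<lambda>v. v"] ballI allI impI)
    subgoal by (rule sigma_rep_exists)
    subgoal by (blast intro: sigma_rep_in_colon)
    subgoal by (blast intro: sigma_rep_diff_in_colon)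
    subgoal using sigma_rep_surj zero_colon by fastforce
    subgoal using kcyc_x_subset_kcyc_z by blast
    subgoal by (simp add: zero_in_kbd)
    subgoal for v v' using kcyc_x_last[of v] kcyc_x_last[of v'] by (intro kbd_z_iff) simp
    subgoal by (rule ker_sigma_iff)
    done
qed

end
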